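(* Let $\vec f=(f_1,\dots,f_n)$ be a profile of acknowledgement-based protocols. The following are equivalent: (i) $\vec f$ is an equilibrium; (ii) for every player $i\in[n]$ and every protocol $g_i\in\mathcal G_i^{\vec f}$, $C_i^{(\vec f_{-i},g_i)}(h_0)=\min_{f_i'}C_i^{(\vec f_{-i},f_i')}(h_0)=C_i^{\vec f}(h_0)$, where the minimum is over all protocols $f_i'$ of player $i$.
   Context: Contention game: $n$ players, channels $K=\{1,\dots,k\}$, slots $t=1,2,\dots$; each player has one packet, initially pending; in each slot a pending player chooses (possibly randomly) an action in $A=\{0,1,\dots,k\}$ ($0$ = idle, $a$ = transmit on channel $a$); a lone transmitter on a channel succeeds and leaves, colliding transmitters remain pending. $X_{i,t}$ is player $i$'s action at slot $t$, $h_{i,t}=(X_{i,1},\dots,X_{i,t})$ her personal history. Acknowledgement-based protocols: decision rules (distributions on $A$ at each slot) depend only on $h_{i,t-1}$; only transmitting players learn whether they succeeded. $T_i$ is player $i$'s latency; $C_i^{\vec f}(h_0)=\mathbb E[T_i\mid\vec f]$ is her unconditional expected latency under profile $\vec f$, and $(\vec f_{-i},g_i)$ denotes the profile with $f_i$ replaced by $g_i$. $\vec f$ is an equilibrium if for every $i$, slot $t$ and history, player $i$ cannot decrease her conditional expected latency by unilaterally deviating after $t$. For $\tau^*\ge1$ and a history $h_{i,\tau^*}=(a_{i,1},\dots,a_{i,\tau^*})$, $g_i(h_{i,\tau^*})$ is the protocol that plays $a_{i,t}$ with probability $1$ at each slot $1\le t\le\tau^*$ and follows $f_{i,t}$ for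 $t>\tau^*$. A history $h_{i,\tau^*}$ is consistent with $\vec f$ if it occurs with positive probability for player $i$ under $\vec f$; $\mathcal G_i^{\vec f}$ is the set of all protocols $g_i(h_{i,\tau^*})$, over all $\tau^*\ge1$, with $h_{i,\tau^*}$ consistent with $\vec f$. *)

theory Defs
  imports "HOL-Probability.Probability"
begin

text \<open>
Players are 0,...,n-1; actions are natural numbers, 0 = idle,
a in {1..k} = transmit on channel a.
A protocol (acknowledgement-based) maps the player's personal history (list of her own
past actions, oldest first) to a distribution over actions for the next slot;
the slot index is the length of the history plus one.
A game state is a pair (pending set, personal histories).
\<close>

type_synonym protocol = "nat list \<Rightarrow> nat pmf"
type_synonym gstate = "nat set \<times> (nat \<Rightarrow> nat list)"

definition is_protocol :: "nat \<Rightarrow> protocol \<Rightarrow> bool" where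
  "is_protocol k p \<longleftrightarrow> (\<forall>h. set_pmf (p h) \<subseteq> {0..k})"

definition succeeds :: "nat set \<Rightarrow> (nat \<Rightarrow> nat) \<Rightarrow> nat \<Rightarrow> bool" where
  "succeeds P a i \<longleftrightarrow> i \<in> P \<and> a i \<noteq> 0 \<and> (\<forall>j\<in>P. j \<noteq> i \<longrightarrow> a j \<noteq> a i)"

definition step :: "(nat \<Rightarrow> protocol) \<Rightarrow> gstate \<Rightarrow> gstate pmf" where
  "step f s = map_pmf
     (\<lambda>a. (fst s - {i. succeeds (fst s) a i},
           \<lambda>i. if i \<in> fst s then snd s i @ [a i] else snd s i))
     (Pi_pmf (fst s) 0 (\<lambda>i. f i (snd s i)))"

fun state_dist :: "nat \<Rightarrow> (nat \<Rightarrow> protocol) \<Rightarrow> nat \<Rightarrow> gstate pmf" where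
  "state_dist n f 0 = return_pmf ({..<n}, \<lambda>_. [])"
| "state_dist n f (Suc t) = bind_pmf (state_dist n f t) (step f)"

text \<open>Player i is still pending after s slots (i.e. T_i > s); this can be read off any
later state, because personal histories only grow.\<close>
definition pending_after :: "nat \<Rightarrow> nat \<Rightarrow> gstate \<Rightarrow> bool" where
  "pending_after i s st \<longleftrightarrow> i \<in> fst st \<or> s < length (snd st i)"

definition has_history :: "nat \<Rightarrow> nat list \<Rightarrow> gstate \<Rightarrow> bool" where
  "has_history i h st \<longleftrightarrow> take (length h) (snd st i) = h"

definition hist_prob :: "nat \<Rightarrow> (nat \<Rightarrow> protocol) \<Rightarrow> nat \<Rightarrow> nat list \<Rightarrow> real" where
  "hist_prob n f i h = measure_pmf.prob (state_dist n f (length h)) {st. has_history i h st}"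

text \<open>Unconditional expected latency  C_i^f(h_0) = E[T_i] = sum_{s>=0} P(T_i > s).\<close>
definition exp_latency :: "nat \<Rightarrow> (nat \<Rightarrow> protocol) \<Rightarrow> nat \<Rightarrow> ennreal" where
  "exp_latency n f i = (\<Sum>s. ennreal (measure_pmf.prob (state_dist n f s) {st. pending_after i s st}))"

text \<open>Conditional expected latency E[T_i | H_{i,t} = h], t = length h:
  E[T_i 1{H_{i,t}=h}] / P(H_{i,t}=h).\<close>
definition cond_latency :: "nat \<Rightarrow> (nat \<Rightarrow> protocol) \<Rightarrow> nat \<Rightarrow> nat list \<Rightarrow> ennreal" where
  "cond_latency n f i h =
     (\<Sum>s. ennreal (measure_pmf.prob (state_dist n f (max s (length h)))
               {st. has_history i h st \<and> pending_after i s st}))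
     / ennreal (hist_prob n f i h)"

definition consistent :: "nat \<Rightarrow> (nat \<Rightarrow> protocol) \<Rightarrow> nat \<Rightarrow> nat list \<Rightarrow> bool" where
  "consistent n f i h \<longleftrightarrow> hist_prob n f i h > 0"

definition equilibrium :: "nat \<Rightarrow> nat \<Rightarrow> (nat \<Rightarrow> protocol) \<Rightarrow> bool" where
  "equilibrium n k f \<longleftrightarrow>
     (\<forall>i<n. \<forall>h. consistent n f i h \<longrightarrow>
        (\<forall>g. is_protocol k g \<and> (\<forall>h'. length h' < length h \<longrightarrow> g h' = f i h') \<longrightarrow>
             cond_latency n f i h \<le> cond_latency n (f(i := g)) i h))"

definition replay :: "(nat \<Rightarrow> protocol) \<Rightarrow> nat \<Rightarrow> nat list \<Rightarrow> protocol" where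
  "replay f i h = (\<lambda>h'. if length h' < length h then return_pmf (h ! length h') else f i h')"

definition G_set :: "nat \<Rightarrow> (nat \<Rightarrow> protocol) \<Rightarrow> nat \<Rightarrow> protocol set" where
  "G_set n f i = {replay f i h | h. h \<noteq> [] \<and> consistent n f i h}"

end

theory Submission
  imports Defs
begin

text \<open>
Write \<open>scripted q h\<close> for the protocol that plays the actions of h and then follows q
(for q = f i this is the paper's g_i(h)), and \<open>path_weight q h\<close> for the probability
that q itself chooses the actions of h.

Conditioning on a personal history factors: for every event X decided after slot |h|,
the probability of "player i has history h, and X" under q is \<open>path_weight q h\<close>
times its probability under \<open>scripted q h\<close>. So the conditional latency given h under
q, or under a deviation g that agrees with q before h, is proportional to the latency
collected on the event "history h" under \<open>scripted q h\<close>, resp. \<open>scripted g h\<close>.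
The latency collected off that event is decided within the first |h| slots, hence
finite and equal for both. A deviation after h therefore helps conditionally iff
\<open>scripted g h\<close> beats \<open>scripted q h\<close> unconditionally.

Moreover the latency under \<open>scripted q h\<close> is the average, over the next action b
drawn from q h, of the latency under \<open>scripted q (h @ [b])\<close>. If f i is a best
response, all these are at least its latency, so by induction along a consistent
history all of them are equal to it. Together: f is an equilibrium iff every f i is a
best response iff (ii).
\<close>

section \<open>Probability mass functions\<close>

lemma emeasure_pmf_eq_0I:
  assumes "\<And>x. x \<in> set_pmf p \<Longrightarrow> x \<notin> A"
  shows "emeasure (measure_pmf p) A = 0"
proof -
  have "A \<inter> set_pmf p = {}" using assms by blast
  then show ?thesis using emeasure_Int_set_pmf[of p A] by simp
qed

lemma emeasure_pmf_eq_1I: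
  assumes "\<And>x. x \<in> set_pmf p \<Longrightarrow> x \<in> A"
  shows "emeasure (measure_pmf p) A = 1"
  by (rule measure_pmf.emeasure_eq_1_AE) (use assms in \<open>auto simp: AE_measure_pmf_iff\<close>)

lemma nn_integral_pmf_eq_lower_bound:
  fixes E :: "'a \<Rightarrow> ennreal" and p :: "'a pmf"
  assumes avg: "(\<integral>\<^sup>+b. E b \<partial>p) = c"
    and lower: "\<And>b. b \<in> set_pmf p \<Longrightarrow> c \<le> E b"
    and a: "a \<in> set_pmf p"
  shows "E a = c"
proof (rule antisym[OF _ lower[OF a]], cases "c = \<infinity>")
  case False
  have "c + (\<integral>\<^sup>+b. (E b - c) \<partial>p) = (\<integral>\<^sup>+b. c + (E b - c) \<partial>p)"
    by (subst nn_integral_add) (auto simp: measure_pmf.emeasure_space_1)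
  also have "\<dots> = c"
    using lower avg
    by (subst nn_integral_cong_AE[where v=E]) (auto simp: AE_measure_pmf_iff add_diff_inverse_ennreal)
  finally have "c + (\<integral>\<^sup>+b. (E b - c) \<partial>p) \<le> c + 0" by simp
  moreover have "(E a - c) * ennreal (pmf p a) \<le> (\<integral>\<^sup>+b. (E b - c) \<partial>p)"
  proof -
    have "(E a - c) * ennreal (pmf p a) = (\<integral>\<^sup>+b. (E a - c) * indicator {a} b \<partial>p)"
      by (simp add: nn_integral_cmult_indicator emeasure_pmf_single)
    also have "\<dots> \<le> (\<integral>\<^sup>+b. (E b - c) \<partial>p)"
      by (intro nn_integral_mono) (auto simp: indicator_def)
    finally show ?thesis .
  qed
  ultimately have "(E a - c) * ennreal (pmf p a) \<le> 0"
    using False by (metis add_left_mono ennreal_add_left_cancel_le order_trans)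
  then have "E a - c = 0"
    using pmf_positive[OF a] by (simp add: ennreal_zero_less_mult_iff le_zero_eq)
  then show "E a \<le> c" by (simp add: diff_eq_0_iff_ennreal)
qed simp

lemma Pi_pmf_bind_coordinate:
  assumes "finite P" "i \<in> P"
  shows "Pi_pmf P d g = bind_pmf (g i) (\<lambda>b. Pi_pmf P d (g(i := return_pmf b)))"
proof -
  have P: "P = insert i (P - {i})" using assms by auto
  have "Pi_pmf P d (g(i := return_pmf b)) =
      bind_pmf (Pi_pmf (P - {i}) d g) (\<lambda>f. return_pmf (f(i := b)))" for b
  proof -
    have "Pi_pmf P d (g(i := return_pmf b)) =
        do {y \<leftarrow> return_pmf b; f \<leftarrow> Pi_pmf (P - {i}) d (g(i := return_pmf b));
            return_pmf (f(i := y))}"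
      by (subst P, subst Pi_pmf_insert') (use assms in auto)
    also have "Pi_pmf (P - {i}) d (g(i := return_pmf b)) = Pi_pmf (P - {i}) d g"
      by (intro Pi_pmf_cong) auto
    finally show ?thesis by (simp add: bind_return_pmf fun_upd_def)
  qed
  moreover have
    "Pi_pmf P d g = do {y \<leftarrow> g i; f \<leftarrow> Pi_pmf (P - {i}) d g; return_pmf (f(i := y))}"
    by (subst P, subst Pi_pmf_insert') (use assms in auto)
  ultimately show ?thesis by simp
qed

section \<open>Dynamics of the contention game\<close>

lemma step_cong:
  assumes "\<And>j. j \<in> fst st \<Longrightarrow> F j (snd st j) = F' j (snd st j)"
  shows "step F st = step F' st"
  unfolding step_def using assms by (intro arg_cong[where f="map_pmf _"] Pi_pmf_cong) auto

lemma set_pmf_stepE: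
  assumes "finite (fst st)" "st' \<in> set_pmf (step F st)"
  obtains a where "\<forall>j\<in>fst st. a j \<in> set_pmf (F j (snd st j))"
    and "st' = (fst st - {j. succeeds (fst st) a j},
                \<lambda>j. if j \<in> fst st then snd st j @ [a j] else snd st j)"
  using assms unfolding step_def by (auto simp: set_Pi_pmf PiE_dflt_def)

lemma set_pmf_state_dist:
  assumes "st \<in> set_pmf (state_dist n F s)"
  shows "fst st \<subseteq> {..<n} \<and> (\<forall>j\<in>fst st. length (snd st j) = s) \<and>
         (\<forall>j. length (snd st j) \<le> s)"
  using assms
proof (induction s arbitrary: st)
  case 0
  then show ?case by auto
next
  case (Suc s)
  then obtain st0 where st0: "st0 \<in> set_pmf (state_dist n F s)" "st \<in> set_pmf (step F st0)"
    by auto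
  note IH = Suc.IH[OF st0(1)]
  then have "finite (fst st0)" using finite_subset by blast
  from this st0(2) obtain a where
    "st = (fst st0 - {j. succeeds (fst st0) a j},
           \<lambda>j. if j \<in> fst st0 then snd st0 j @ [a j] else snd st0 j)"
    by (rule set_pmf_stepE)
  then show ?case using IH by (auto simp: le_Suc_eq)
qed

lemma finite_pending: "st \<in> set_pmf (state_dist n F s) \<Longrightarrow> finite (fst st)"
  by (meson finite_lessThan finite_subset set_pmf_state_dist)

lemma state_dist_cong:
  assumes "\<And>j h. length h < s \<Longrightarrow> F j h = F' j h"
  shows "state_dist n F s = state_dist n F' s"
  using assms
proof (induction s)
  case 0
  then show ?case by simp
next
  case (Suc s)
  have "step F st = step F' st" if "st \<in> set_pmf (state_dist n F' s)" for st
    using set_pmf_state_dist[OF that] Suc.prems by (intro step_cong) auto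
  moreover have "state_dist n F s = state_dist n F' s" using Suc by auto
  ultimately show ?case by (auto intro: bind_pmf_cong)
qed

lemma pending_after_step:
  assumes "st \<in> set_pmf (state_dist n F s')" "s \<le> s'" "st' \<in> set_pmf (step F st)"
  shows "pending_after i s st' \<longleftrightarrow> pending_after i s st"
  using finite_pending[OF assms(1)] assms(3)
  by (rule set_pmf_stepE)
    (use set_pmf_state_dist[OF assms(1)] assms(2) in \<open>auto simp: pending_after_def\<close>)

lemma emeasure_pending_after_later:
  assumes "s \<le> s'"
  shows "emeasure (state_dist n F s') {st. pending_after i s st} =
         emeasure (state_dist n F s) {st. pending_after i s st}"
  using assms
proof (induction s' rule: dec_induct)
  case base
  then show ?case by simp
next
  case (step m)
  let ?A = "{st. pending_after i s st}"
  have one_step: "emeasure (step F st) ?A = indicator ?A st"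
    if "st \<in> set_pmf (state_dist n F m)" for st
    using pending_after_step[OF that step(1)]
    by (cases "pending_after i s st") (auto intro: emeasure_pmf_eq_1I emeasure_pmf_eq_0I)
  have "emeasure (state_dist n F (Suc m)) ?A =
        (\<integral>\<^sup>+st. emeasure (step F st) ?A \<partial>state_dist n F m)"
    by simp
  also have "\<dots> = (\<integral>\<^sup>+st. indicator ?A st \<partial>state_dist n F m)"
    by (intro nn_integral_cong_AE) (simp add: AE_measure_pmf_iff one_step)
  finally show ?case using step by simp
qed

lemma exp_latency_eq_emeasure:
  "exp_latency n F i = (\<Sum>s. emeasure (state_dist n F s) {st. pending_after i s st})"
  unfolding exp_latency_def by (simp add: measure_pmf.emeasure_eq_measure)

text \<open>The expectation of T_i on an event E that is decided by the first t slots.\<close>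

definition partial_latency ::
    "nat \<Rightarrow> (nat \<Rightarrow> protocol) \<Rightarrow> nat \<Rightarrow> nat \<Rightarrow> (gstate \<Rightarrow> bool) \<Rightarrow> ennreal" where
  "partial_latency n F i t E =
     (\<Sum>s. emeasure (state_dist n F (max s t)) {st. E st \<and> pending_after i s st})"

lemma exp_latency_split:
  "exp_latency n F i = partial_latency n F i t E + partial_latency n F i t (\<lambda>st. \<not> E st)"
proof -
  have "emeasure (state_dist n F s) {st. pending_after i s st} =
        emeasure (state_dist n F (max s t)) {st. E st \<and> pending_after i s st} +
        emeasure (state_dist n F (max s t)) {st. \<not> E st \<and> pending_after i s st}" for s
  proof -
    have "emeasure (state_dist n F s) {st. pending_after i s st} =
          emeasure (state_dist n F (max s t)) {st. pending_after i s st}"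
      by (rule emeasure_pending_after_later[symmetric]) simp
    also have "\<dots> = emeasure (state_dist n F (max s t))
        ({st. E st \<and> pending_after i s st} \<union> {st. \<not> E st \<and> pending_after i s st})"
      by (rule arg_cong[where f="emeasure _"]) auto
    also have "\<dots> = emeasure (state_dist n F (max s t)) {st. E st \<and> pending_after i s st} +
        emeasure (state_dist n F (max s t)) {st. \<not> E st \<and> pending_after i s st}"
      by (rule plus_emeasure[symmetric]) auto
    finally show ?thesis .
  qed
  then show ?thesis
    unfolding exp_latency_eq_emeasure partial_latency_def by (simp add: suminf_add summableI)
qed

lemma cond_latency_eq_partial_latency:
  "cond_latency n F i h =
   partial_latency n F i (length h) (has_history i h) / ennreal (hist_prob n F i h)"
  unfolding cond_latency_def partial_latency_def by (simp add: measure_pmf.emeasure_eq_measure)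

lemma hist_prob_Nil: "hist_prob n F i [] = 1"
  unfolding hist_prob_def has_history_def by simp

lemma cond_latency_Nil: "cond_latency n F i [] = exp_latency n F i"
  unfolding cond_latency_def exp_latency_def hist_prob_Nil has_history_def
  by (simp add: divide_ennreal_def)

section \<open>Scripted protocols\<close>

lemma is_protocolD: "is_protocol k q \<Longrightarrow> a \<in> set_pmf (q h) \<Longrightarrow> a \<in> {0..k}"
  unfolding is_protocol_def by blast

definition scripted :: "protocol \<Rightarrow> nat list \<Rightarrow> protocol" where
  "scripted q h = (\<lambda>h'. if length h' < length h then return_pmf (h ! length h') else q h')"

lemma scripted_Nil [simp]: "scripted q [] = q"
  by (simp add: scripted_def)

lemma replay_eq_scripted: "replay f i h = scripted (f i) h"
  unfolding replay_def scripted_def ..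

lemma is_protocol_scripted:
  "is_protocol k q \<Longrightarrow> set h \<subseteq> {0..k} \<Longrightarrow> is_protocol k (scripted q h)"
proof -
  assume q: "is_protocol k q" and h: "set h \<subseteq> {0..k}"
  have "h ! length h' \<in> {0..k}" if "length h' < length h" for h'
    using nth_mem[OF that] h by blast
  then show ?thesis using q unfolding is_protocol_def scripted_def by auto
qed

lemma take_history_scripted:
  assumes "st \<in> set_pmf (state_dist n (F(i := scripted q h)) s)"
  shows "take (length h) (snd st i) = take (length (snd st i)) h"
  using assms
proof (induction s arbitrary: st)
  case 0
  then show ?case by auto
next
  case (Suc s)
  then obtain st0 where st0: "st0 \<in> set_pmf (state_dist n (F(i := scripted q h)) s)"
      "st \<in> set_pmf (step (F(i := scripted q h)) st0)"
    by (simp only: state_dist.simps set_bind_pmf) blast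
  note IH = Suc.IH[OF st0(1)]
  from finite_pending[OF st0(1)] st0(2) obtain a where
    a: "\<forall>j\<in>fst st0. a j \<in> set_pmf ((F(i := scripted q h)) j (snd st0 j))" and
    st: "st = (fst st0 - {j. succeeds (fst st0) a j},
               \<lambda>j. if j \<in> fst st0 then snd st0 j @ [a j] else snd st0 j)"
    by (rule set_pmf_stepE)
  show ?case
  proof (cases "i \<in> fst st0")
    case False
    then show ?thesis using IH st by simp
  next
    case pending: True
    then have len: "length (snd st0 i) = s" using set_pmf_state_dist[OF st0(1)] by auto
    have ai: "a i \<in> set_pmf (scripted q h (snd st0 i))" using a pending by auto
    show ?thesis
    proof (cases "s < length h")
      case True
      then have "a i = h ! s" and "snd st0 i = take s h" using ai len IH by (auto simp: scripted_def)
      then show ?thesis using st pending True by (simp add: take_Suc_conv_app_nth)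
    next
      case False
      then show ?thesis using st pending len IH by auto
    qed
  qed
qed

lemma has_history_scripted:
  assumes "st \<in> set_pmf (state_dist n (F(i := scripted q h)) s)" "length h \<le> length (snd st i)"
  shows "has_history i h st"
  using take_history_scripted[OF assms(1)] assms(2) by (simp add: has_history_def)

lemma state_dist_scripted_snoc_early:
  "s \<le> length h \<Longrightarrow>
   state_dist n (F(i := scripted q (h @ [b]))) s = state_dist n (F(i := scripted q h)) s"
  by (intro state_dist_cong) (auto simp: scripted_def nth_append)

lemma step_scripted_snoc_late:
  assumes "st \<in> set_pmf (state_dist n F' s)" "length h < s"
  shows "step (F(i := scripted q (h @ [b]))) st = step (F(i := scripted q h)) st"
  using set_pmf_state_dist[OF assms(1)] assms(2) by (intro step_cong) (auto simp: scripted_def)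

lemma step_scripted_bind:
  assumes st: "st \<in> set_pmf (state_dist n (F(i := scripted q h)) (length h))"
  shows "step (F(i := scripted q h)) st =
         bind_pmf (q h) (\<lambda>b. step (F(i := scripted q (h @ [b]))) st)"
proof (cases "i \<in> fst st")
  case False
  then have "step (F(i := scripted q (h @ [b]))) st = step (F(i := scripted q h)) st" for b
    by (intro step_cong) auto
  then show ?thesis by simp
next
  case True
  then have hist: "snd st i = h"
    using has_history_scripted[OF st] set_pmf_state_dist[OF st] by (auto simp: has_history_def)
  define g where "g = (\<lambda>j. (F(i := scripted q h)) j (snd st j))"
  have "g i = q h" using hist by (simp add: g_def scripted_def)
  moreover have "(\<lambda>j. (F(i := scripted q (h @ [b]))) j (snd st j)) = g(i := return_pmf b)" for b
    using hist by (auto simp: g_def scripted_def fun_eq_iff)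
  ultimately show ?thesis
    unfolding step_def g_def[symmetric]
    by (subst Pi_pmf_bind_coordinate[OF finite_pending[OF st] True]) (simp add: map_bind_pmf)
qed

lemma state_dist_scripted_bind:
  "state_dist n (F(i := scripted q h)) s =
   bind_pmf (q h) (\<lambda>b. state_dist n (F(i := scripted q (h @ [b]))) s)"
proof (induction s)
  case 0
  then show ?case by simp
next
  case (Suc s)
  let ?R = "F(i := scripted q h)" and ?Rb = "\<lambda>b. F(i := scripted q (h @ [b]))"
  consider "Suc s \<le> length h" | "s = length h" | "length h < s" by linarith
  then show ?case
  proof cases
    case 1
    then show ?thesis by (simp only: state_dist_scripted_snoc_early bind_pmf_const)
  next
    case 2
    have "state_dist n ?R (Suc s) =
          bind_pmf (state_dist n ?R s) (\<lambda>st. bind_pmf (q h) (\<lambda>b. step (?Rb b) st))"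
      using 2 by (simp only: state_dist.simps) (intro bind_pmf_cong refl step_scripted_bind)
    also have "\<dots> = bind_pmf (q h) (\<lambda>b. bind_pmf (state_dist n ?R s) (step (?Rb b)))"
      by (rule bind_commute_pmf)
    also have "\<dots> = bind_pmf (q h) (\<lambda>b. state_dist n (?Rb b) (Suc s))"
      using 2 by (simp add: state_dist_scripted_snoc_early)
    finally show ?thesis .
  next
    case 3
    have "bind_pmf (state_dist n (?Rb b) s) (step ?R) = bind_pmf (state_dist n (?Rb b) s) (step (?Rb b))"
      for b using 3 by (intro bind_pmf_cong refl step_scripted_snoc_late[symmetric])
    then show ?thesis by (simp only: state_dist.simps Suc.IH bind_assoc_pmf)
  qed
qed

lemma exp_latency_scripted_bind:
  "exp_latency n (F(i := scripted q h)) j =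
   (\<integral>\<^sup>+b. exp_latency n (F(i := scripted q (h @ [b]))) j \<partial>q h)"
proof -
  have "emeasure (state_dist n (F(i := scripted q h)) s) {st. pending_after j s st} =
     (\<integral>\<^sup>+b. emeasure (state_dist n (F(i := scripted q (h @ [b]))) s)
                 {st. pending_after j s st} \<partial>q h)"
    for s by (simp only: state_dist_scripted_bind[of n F i q h s] emeasure_bind_pmf)
  then show ?thesis unfolding exp_latency_eq_emeasure by (simp add: nn_integral_suminf)
qed

section \<open>Conditioning on a personal history\<close>

definition path_weight :: "protocol \<Rightarrow> nat list \<Rightarrow> real" where
  "path_weight q h = (\<Prod>j<length h. pmf (q (take j h)) (h ! j))"

lemma path_weight_Nil [simp]: "path_weight q [] = 1"
  by (simp add: path_weight_def)

lemma path_weight_snoc: "path_weight q (h @ [a]) = path_weight q h * pmf (q h) a"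
  unfolding path_weight_def by (simp add: nth_append)

lemma path_weight_nonneg: "path_weight q h \<ge> 0"
  unfolding path_weight_def by (simp add: prod_nonneg)

lemma path_weight_cong:
  "(\<And>h'. length h' < length h \<Longrightarrow> q' h' = q h') \<Longrightarrow> path_weight q' h = path_weight q h"
  unfolding path_weight_def by (intro prod.cong refl) simp

lemma path_weight_snoc_pos_iff:
  "path_weight q (h @ [a]) > 0 \<longleftrightarrow> path_weight q h > 0 \<and> a \<in> set_pmf (q h)"
  using path_weight_nonneg[of q h] pmf_nonneg[of "q h" a]
  by (auto simp: path_weight_snoc zero_less_mult_iff pmf_positive_iff)

lemma set_subset_if_path_weight_pos:
  assumes "is_protocol k q" "path_weight q h > 0"
  shows "set h \<subseteq> {0..k}"
  using assms(2)
proof (induction h rule: rev_induct)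
  case (snoc a h)
  then have "set h \<subseteq> {0..k}" and "a \<in> set_pmf (q h)"
    by (simp_all add: path_weight_snoc_pos_iff)
  with is_protocolD[OF assms(1)] show ?case by simp
qed simp

lemma has_history_snocD:
  assumes "has_history i (h @ [a]) st"
  shows "has_history i h st"
proof -
  have "take (length h) (take (length (h @ [a])) (snd st i)) = h"
    using assms by (simp add: has_history_def)
  then show ?thesis by (simp add: has_history_def)
qed

lemma length_le_if_has_history:
  assumes "has_history i h st"
  shows "length h \<le> length (snd st i)"
proof -
  have "length (take (length h) (snd st i)) = length h"
    using assms by (simp only: has_history_def)
  then show ?thesis by (simp only: length_take)
qed

lemma emeasure_has_history_path_weight:
  assumes "length h \<le> s"
  shows "emeasure (state_dist n (F(i := q)) s) {st. has_history i h st \<and> X st} =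
    ennreal (path_weight q h) *
    emeasure (state_dist n (F(i := scripted q h)) s) {st. has_history i h st \<and> X st}"
  using assms
proof (induction h arbitrary: X rule: rev_induct)
  case Nil
  then show ?case by simp
next
  case (snoc a h)
  let ?A = "{st. has_history i (h @ [a]) st \<and> X st}"
  let ?M = "\<lambda>b. state_dist n (F(i := scripted q (h @ [b]))) s"
  have A: "?A = {st. has_history i h st \<and> (has_history i (h @ [a]) st \<and> X st)}"
    using has_history_snocD by blast
  have "emeasure (state_dist n (F(i := q)) s) ?A =
      ennreal (path_weight q h) * emeasure (state_dist n (F(i := scripted q h)) s) ?A"
    unfolding A by (rule snoc.IH) (use snoc.prems in simp)
  also have "emeasure (state_dist n (F(i := scripted q h)) s) ?A =
      (\<integral>\<^sup>+b. emeasure (?M b) ?A \<partial>q h)"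
    by (simp only: state_dist_scripted_bind[of n F i q h s] emeasure_bind_pmf)
  also have "\<dots> = (\<integral>\<^sup>+b. emeasure (?M a) ?A * indicator {a} b \<partial>q h)"
  proof (intro nn_integral_cong)
    fix b
    have excluded: "st \<notin> ?A" if "st \<in> set_pmf (?M b)" "b \<noteq> a" for st
    proof
      assume "st \<in> ?A"
      then have hist: "has_history i (h @ [a]) st" by simp
      then have "length (h @ [b]) \<le> length (snd st i)"
        using length_le_if_has_history by fastforce
      with hist has_history_scripted[OF that(1)] show False
        using that(2) by (simp add: has_history_def)
    qed
    then show "emeasure (?M b) ?A = emeasure (?M a) ?A * indicator {a} b"
    proof (cases "b = a")
      case False
      then have "emeasure (?M b) ?A = 0" using excluded by (intro emeasure_pmf_eq_0I) auto
      with False show ?thesis by simp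
    qed simp
  qed
  also have "\<dots> = emeasure (?M a) ?A * pmf (q h) a"
    by (simp add: nn_integral_cmult_indicator emeasure_pmf_single)
  moreover have "ennreal (path_weight q (h @ [a])) = ennreal (path_weight q h) * pmf (q h) a"
    by (simp add: path_weight_snoc ennreal_mult path_weight_nonneg)
  ultimately show ?case
    by (simp only: mult.assoc mult.commute[of "emeasure _ _" "ennreal (pmf _ _)"])
qed

lemma partial_latency_path_weight:
  "partial_latency n (F(i := q)) i (length h) (has_history i h) =
   ennreal (path_weight q h) * partial_latency n (F(i := scripted q h)) i (length h) (has_history i h)"
proof -
  have "emeasure (state_dist n (F(i := q)) (max s (length h)))
          {st. has_history i h st \<and> pending_after i s st} =
        ennreal (path_weight q h) *
        emeasure (state_dist n (F(i := scripted q h)) (max s (length h)))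
          {st. has_history i h st \<and> pending_after i s st}" for s
    by (rule emeasure_has_history_path_weight) simp
  then show ?thesis unfolding partial_latency_def by (simp only: ennreal_suminf_cmult)
qed

lemma hist_prob_path_weight:
  "ennreal (hist_prob n (F(i := q)) i h) =
   ennreal (path_weight q h) *
   emeasure (state_dist n (F(i := scripted q h)) (length h)) {st. has_history i h st}"
  using emeasure_has_history_path_weight[of h "length h" n F i q "\<lambda>_. True"]
  by (simp add: hist_prob_def measure_pmf.emeasure_eq_measure)

lemma path_weight_pos_if_consistent:
  assumes "consistent n F i h"
  shows "path_weight (F i) h > 0"
proof -
  have "path_weight (F i) h \<noteq> 0"
    using assms hist_prob_path_weight[of n F i "F i" h] by (auto simp: consistent_def)
  then show ?thesis using path_weight_nonneg[of "F i" h] by linarith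
qed

lemma ex_consistent_singleton:
  assumes "i < n"
  obtains a where "consistent n F i [a]"
proof -
  obtain a where a: "a \<in> set_pmf (F i [])" using set_pmf_not_empty by fast
  let ?G = "F(i := scripted (F i) [a])"
  define init :: gstate where "init = ({..<n}, \<lambda>_. [])"
  have "finite (fst init)" by (simp add: init_def)
  have "emeasure (state_dist n ?G 1) {st. has_history i [a] st} = 1"
  proof (rule emeasure_pmf_eq_1I)
    fix st assume "st \<in> set_pmf (state_dist n ?G 1)"
    then have "st \<in> set_pmf (step ?G init)" by (simp add: init_def)
    with \<open>finite (fst init)\<close> obtain x where
      x: "\<forall>j\<in>fst init. x j \<in> set_pmf (?G j (snd init j))" and
      st: "st = (fst init - {j. succeeds (fst init) x j},
                 \<lambda>j. if j \<in> fst init then snd init j @ [x j] else snd init j)"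
      by (rule set_pmf_stepE)
    have "x i = a" using bspec[OF x, of i] assms by (simp add: init_def scripted_def)
    with assms show "st \<in> {st. has_history i [a] st}"
      by (simp add: st init_def has_history_def)
  qed
  then have "ennreal (hist_prob n F i [a]) = ennreal (pmf (F i []) a)"
    using hist_prob_path_weight[of n F i "F i" "[a]"] by (simp add: path_weight_def)
  with pmf_positive[OF a] have "consistent n F i [a]"
    unfolding consistent_def by (metis ennreal_less_zero_iff)
  then show thesis by (rule that)
qed

lemma partial_latency_scripted_not_history:
  "partial_latency n (F(i := scripted q h)) i (length h) (\<lambda>st. \<not> has_history i h st) =
   (\<Sum>s<length h. emeasure (state_dist n (F(i := scripted q h)) (length h))
                    {st. \<not> has_history i h st \<and> pending_after i s st})"
proof -
  have "emeasure (state_dist n (F(i := scripted q h)) s)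
          {st. \<not> has_history i h st \<and> pending_after i s st} = 0"
    if "length h \<le> s" for s
  proof (rule emeasure_pmf_eq_0I)
    fix st assume st: "st \<in> set_pmf (state_dist n (F(i := scripted q h)) s)"
    have "length h \<le> length (snd st i)" if "pending_after i s st"
      using that set_pmf_state_dist[OF st] \<open>length h \<le> s\<close> by (auto simp: pending_after_def)
    then show "st \<notin> {st. \<not> has_history i h st \<and> pending_after i s st}"
      using has_history_scripted[OF st] by auto
  qed
  then show ?thesis
    unfolding partial_latency_def by (subst suminf_finite[of "{..<length h}"]) (auto simp: max_def)
qed

lemma cond_latency_mono_scripted:
  assumes agree: "\<And>h'. length h' < length h \<Longrightarrow> q' h' = q h'"
    and le: "exp_latency n (F(i := scripted q h)) i \<le> exp_latency n (F(i := scripted q' h)) i"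
  shows "cond_latency n (F(i := q)) i h \<le> cond_latency n (F(i := q')) i h"
proof -
  let ?R = "F(i := scripted q h)" and ?P = "F(i := scripted q' h)" and ?E = "has_history i h"
  let ?on = "\<lambda>G. partial_latency n G i (length h) ?E"
    and ?off = "\<lambda>G. partial_latency n G i (length h) (\<lambda>st. \<not> ?E st)"
  have start: "state_dist n ?P (length h) = state_dist n ?R (length h)"
    by (intro state_dist_cong) (simp add: scripted_def agree)
  have "?off ?P = ?off ?R"
    by (simp only: partial_latency_scripted_not_history start)
  moreover have "?off ?R \<noteq> \<infinity>"
    by (simp add: partial_latency_scripted_not_history measure_pmf.emeasure_finite)
  ultimately have on: "?on ?R \<le> ?on ?P"
    using le exp_latency_split[of n ?R i "length h" ?E] exp_latency_split[of n ?P i "length h" ?E]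
    by (simp add: add.commute[of "?on _"] ennreal_add_left_cancel_le)
  have weight: "path_weight q' h = path_weight q h"
    using agree by (rule path_weight_cong)
  have hist: "ennreal (hist_prob n (F(i := q')) i h) = ennreal (hist_prob n (F(i := q)) i h)"
    unfolding hist_prob_path_weight[of n F i q h] hist_prob_path_weight[of n F i q' h] weight start ..
  show ?thesis
    unfolding cond_latency_eq_partial_latency
      partial_latency_path_weight[of n F i q h] partial_latency_path_weight[of n F i q' h] weight hist
    using on by (intro divide_right_mono_ennreal mult_left_mono) auto
qed

section \<open>Best responses and equilibria\<close>

definition best_response :: "nat \<Rightarrow> nat \<Rightarrow> (nat \<Rightarrow> protocol) \<Rightarrow> nat \<Rightarrow> bool" where
  "best_response n k f i \<longleftrightarrow>
     (\<forall>p. is_protocol k p \<longrightarrow> exp_latency n f i \<le> exp_latency n (f(i := p)) i)"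

lemma exp_latency_scripted_if_best_response:
  assumes prot: "is_protocol k (f i)" and best: "best_response n k f i"
    and pos: "path_weight (f i) h > 0"
  shows "exp_latency n (f(i := scripted (f i) h)) i = exp_latency n f i"
  using pos
proof (induction h rule: rev_induct)
  case Nil
  then show ?case by simp
next
  case (snoc a h)
  then have pos_h: "path_weight (f i) h > 0" and a: "a \<in> set_pmf (f i h)"
    by (simp_all add: path_weight_snoc_pos_iff)
  have "(\<integral>\<^sup>+b. exp_latency n (f(i := scripted (f i) (h @ [b]))) i \<partial>f i h) =
        exp_latency n f i"
    unfolding exp_latency_scripted_bind[of n f i "f i" h i, symmetric] by (rule snoc.IH[OF pos_h])
  moreover have "exp_latency n f i \<le> exp_latency n (f(i := scripted (f i) (h @ [b]))) i"
    if "b \<in> set_pmf (f i h)" for b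
  proof -
    have "set (h @ [b]) \<subseteq> {0..k}"
      using set_subset_if_path_weight_pos[OF prot pos_h] is_protocolD[OF prot that] by simp
    with prot have "is_protocol k (scripted (f i) (h @ [b]))" by (rule is_protocol_scripted)
    with best show ?thesis unfolding best_response_def by blast
  qed
  ultimately show ?case using a by (rule nn_integral_pmf_eq_lower_bound)
qed

lemma INF_exp_latency_eq_iff_best_response:
  assumes "is_protocol k (f i)"
  shows "(INF p\<in>{p. is_protocol k p}. exp_latency n (f(i := p)) i) = exp_latency n f i \<longleftrightarrow>
         best_response n k f i"
proof
  assume "(INF p\<in>{p. is_protocol k p}. exp_latency n (f(i := p)) i) = exp_latency n f i"
  then show "best_response n k f i"
    unfolding best_response_def by (metis INF_lower mem_Collect_eq)
next
  assume "best_response n k f i"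
  then have "exp_latency n f i \<le> (INF p\<in>{p. is_protocol k p}. exp_latency n (f(i := p)) i)"
    unfolding best_response_def by (simp add: le_INF_iff)
  moreover have
    "(INF p\<in>{p. is_protocol k p}. exp_latency n (f(i := p)) i) \<le> exp_latency n (f(i := f i)) i"
    using assms by (intro INF_lower) simp
  ultimately show "(INF p\<in>{p. is_protocol k p}. exp_latency n (f(i := p)) i) = exp_latency n f i"
    by simp
qed

lemma best_response_if_equilibrium:
  assumes "equilibrium n k f" "i < n"
  shows "best_response n k f i"
  unfolding best_response_def
proof (intro allI impI)
  fix p assume "is_protocol k p"
  with assms have "cond_latency n f i [] \<le> cond_latency n (f(i := p)) i []"
    by (simp add: equilibrium_def consistent_def hist_prob_Nil)
  then show "exp_latency n f i \<le> exp_latency n (f(i := p)) i"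
    by (simp only: cond_latency_Nil)
qed

lemma equilibrium_if_best_responses:
  assumes prot: "\<forall>i<n. is_protocol k (f i)" and best: "\<forall>i<n. best_response n k f i"
  shows "equilibrium n k f"
  unfolding equilibrium_def
proof (intro allI impI, elim conjE)
  fix i h g
  assume i: "i < n" and h: "consistent n f i h" and g: "is_protocol k g"
    and agree: "\<forall>h'. length h' < length h \<longrightarrow> g h' = f i h'"
  have pos: "path_weight (f i) h > 0" using h by (rule path_weight_pos_if_consistent)
  with prot i have "set h \<subseteq> {0..k}" by (intro set_subset_if_path_weight_pos) auto
  with g have "is_protocol k (scripted g h)" by (rule is_protocol_scripted)
  moreover have "exp_latency n (f(i := scripted (f i) h)) i = exp_latency n f i"
    using prot best i pos by (intro exp_latency_scripted_if_best_response) auto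
  ultimately have
    "exp_latency n (f(i := scripted (f i) h)) i \<le> exp_latency n (f(i := scripted g h)) i"
    using best i unfolding best_response_def by simp
  then have "cond_latency n (f(i := f i)) i h \<le> cond_latency n (f(i := g)) i h"
    using agree by (intro cond_latency_mono_scripted) auto
  then show "cond_latency n f i h \<le> cond_latency n (f(i := g)) i h" by simp
qed

lemma equilibrium_iff_best_responses:
  assumes "\<forall>i<n. is_protocol k (f i)"
  shows "equilibrium n k f \<longleftrightarrow> (\<forall>i<n. best_response n k f i)"
  using assms best_response_if_equilibrium equilibrium_if_best_responses by blast

lemma best_response_iff_G_set:
  assumes "i < n" "is_protocol k (f i)"
  shows "best_response n k f i \<longleftrightarrow>
    (\<forall>g\<in>G_set n f i.
       exp_latency n (f(i := g)) i = (INF p\<in>{p. is_protocol k p}. exp_latency n (f(i := p)) i)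
     \<and> (INF p\<in>{p. is_protocol k p}. exp_latency n (f(i := p)) i) = exp_latency n f i)"
    (is "_ \<longleftrightarrow> (\<forall>g\<in>_. ?optimal g)")
proof
  have inf: "(INF p\<in>{p. is_protocol k p}. exp_latency n (f(i := p)) i) = exp_latency n f i
      \<longleftrightarrow> best_response n k f i"
    using assms(2) by (rule INF_exp_latency_eq_iff_best_response)
  {
    assume best: "best_response n k f i"
    show "\<forall>g\<in>G_set n f i. ?optimal g"
    proof
      fix g assume "g \<in> G_set n f i"
      then obtain h where g: "g = scripted (f i) h" and h: "consistent n f i h"
        unfolding G_set_def replay_eq_scripted by blast
      have "exp_latency n (f(i := g)) i = exp_latency n f i"
        unfolding g using assms(2) best path_weight_pos_if_consistent[OF h]
        by (rule exp_latency_scripted_if_best_response)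
      with best inf show "?optimal g" by simp
    qed
  }
  assume G: "\<forall>g\<in>G_set n f i. ?optimal g"
  obtain a where "consistent n f i [a]" using ex_consistent_singleton[OF assms(1)] .
  then have "replay f i [a] \<in> G_set n f i" unfolding G_set_def by blast
  with G inf show "best_response n k f i" by blast
qed

theorem lemma1:
  fixes n k :: nat and f :: "nat \<Rightarrow> protocol"
  assumes "k \<ge> 1"
    and "\<forall>i<n. is_protocol k (f i)"
  shows "equilibrium n k f \<longleftrightarrow>
    (\<forall>i<n. \<forall>g\<in>G_set n f i.
       exp_latency n (f(i := g)) i = (INF f'\<in>{p. is_protocol k p}. exp_latency n (f(i := f')) i)
     \<and> (INF f'\<in>{p. is_protocol k p}. exp_latency n (f(i := f')) i) = exp_latency n f i)"
  using assms(2) by (simp add: equilibrium_iff_best_responses best_response_iff_G_set)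

end
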